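(* Let $\phi:\mathbb{R}^m\to\mathbb{R}$ be a sublinear function, $\lambda\in\mathbb{R}^n$ with $\|\lambda\|=1$, and $C=\{(x,y)\in\mathbb{R}^{n+m}:\phi(y)\le\lambda^\mathsf{T} x\}$. Let $(\bar x,\bar y)\in C$ be such that $\phi$ is differentiable at $\bar y$ and $\phi(\bar y)=\lambda^\mathsf{T}\bar x$. Then $(\bar x,\bar y)$ exposes the valid inequality $-\lambda^\mathsf{T} x+\nabla\phi(\bar y)^\mathsf{T} y\le0$ with respect to $C$.
   Context: A function is sublinear if it is convex and positively homogeneous. An inequality $\alpha^\mathsf{T} z\le\beta$ (written $(\alpha,\beta)$) is valid for $C$ if it holds on $C$; it is non-trivial if $\alpha\neq0$. A point $z_0$ exposes a valid inequality $(\alpha,\beta)$ with respect to a convex set $C$ if $\alpha^\mathsf{T} z_0=\beta$ and for every non-trivial valid inequality $\gamma^\mathsf{T} z\le\delta$ for $C$ with $\gamma^\mathsf{T} z_0=\delta$ there is $\mu>0$ with $\gamma=\mu\alpha$ and $\delta=\mu\beta$. *)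

theory Defs
  imports "HOL-Analysis.Analysis"
begin

definition sublinear :: "('a::real_vector \<Rightarrow> real) \<Rightarrow> bool" where
  "sublinear f \<longleftrightarrow> convex_on UNIV f \<and> (\<forall>t>0. \<forall>y. f (t *\<^sub>R y) = t * f y)"

definition valid_ineq :: "'a::real_inner \<Rightarrow> real \<Rightarrow> 'a set \<Rightarrow> bool" where
  "valid_ineq \<alpha> \<beta> C \<longleftrightarrow> (\<forall>z\<in>C. \<alpha> \<bullet> z \<le> \<beta>)"

definition exposes :: "'a::real_inner \<Rightarrow> 'a \<Rightarrow> real \<Rightarrow> 'a set \<Rightarrow> bool" where
  "exposes z0 \<alpha> \<beta> C \<longleftrightarrow> \<alpha> \<bullet> z0 = \<beta> \<and>
     (\<forall>\<gamma> \<delta>. \<gamma> \<noteq> 0 \<and> valid_ineq \<gamma> \<delta> C \<and> \<gamma> \<bullet> z0 = \<delta> \<longrightarrow>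
        (\<exists>\<mu>>0. \<gamma> = \<mu> *\<^sub>R \<alpha> \<and> \<delta> = \<mu> * \<beta>))"

end

theory Submission
  imports Defs
begin

text \<open>The gradient g of the sublinear \<open>\<phi>\<close> at ybar is a subgradient by convexity, and positive
homogeneity forces \<open>g \<bullet> ybar = \<phi> ybar\<close>; so \<open>g \<bullet> y \<le> \<phi> y\<close> everywhere, which gives validity and
tightness. Conversely, let \<open>(u, v) \<bullet> z \<le> \<delta>\<close> be valid and tight at (xbar, ybar). As C is a
cone, \<open>\<delta> = 0\<close>. Perturbing x inside the halfspace \<open>lam \<bullet> w \<ge> 0\<close> forces \<open>u = - a *\<^sub>R lam\<close> with
\<open>a \<ge> 0\<close>; moving x along lam to stay on the boundary of C shows that \<open>v \<bullet> y - a * \<phi> y\<close> is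
maximal at ybar, so its gradient \<open>v - a *\<^sub>R g\<close> vanishes. Finally \<open>a > 0\<close> because \<open>(u, v) \<noteq> 0\<close>.\<close>

lemma convex_on_above_linearization:
  fixes f :: "'a::real_normed_vector \<Rightarrow> real"
  assumes convex: "convex_on UNIV f" and deriv: "(f has_derivative f') (at x)"
  shows "f x + f' (y - x) \<le> f y"
proof -
  define d where "d = y - x"
  define h where "h = (\<lambda>t::real. f (x + t *\<^sub>R d))"
  have "convex_on UNIV h"
  proof (rule convex_onI)
    fix t :: real and a b
    assume t: "0 < t" "t < 1"
    have "x + ((1 - t) * a + t * b) *\<^sub>R d = (1 - t) *\<^sub>R (x + a *\<^sub>R d) + t *\<^sub>R (x + b *\<^sub>R d)"
      by (simp add: algebra_simps)
    then show "h ((1 - t) *\<^sub>R a + t *\<^sub>R b) \<le> (1 - t) * h a + t * h b"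
      unfolding h_def using convex_onD[OF convex, of t "x + a *\<^sub>R d" "x + b *\<^sub>R d"] t by simp
  qed simp
  moreover have "(h has_field_derivative f' d) (at 0)"
  proof -
    have line: "((\<lambda>t::real. x + t *\<^sub>R d) has_derivative (\<lambda>t. t *\<^sub>R d)) (at 0)"
      by (auto intro!: derivative_eq_intros)
    have "(h has_derivative (\<lambda>t. f' (t *\<^sub>R d))) (at 0)"
      unfolding h_def using has_derivative_compose[OF line] deriv by (simp add: o_def)
    moreover have "(\<lambda>t. f' (t *\<^sub>R d)) = (\<lambda>t. t * f' d)"
      using linear_scale[OF has_derivative_linear[OF deriv]] by auto
    ultimately show ?thesis
      by (simp add: has_field_derivative_def mult.commute[of _ "f' d"])
  qed
  ultimately have "f' d * (1 - 0) \<le> h 1 - h 0"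
    by (intro convex_on_imp_above_tangent) auto
  then show ?thesis unfolding h_def d_def by simp
qed

lemma sublinear_zero:
  assumes "sublinear f"
  shows "f 0 = 0"
  using assms unfolding sublinear_def by (metis mult_2 scaleR_zero_right add_cancel_left_right zero_less_numeral)

lemma sublinear_gradient_supports:
  assumes "sublinear f" and deriv: "(f has_derivative (\<lambda>h. g \<bullet> h)) (at x)"
  shows "g \<bullet> x = f x" and "g \<bullet> y \<le> f y"
proof -
  have convex: "convex_on UNIV f" and double: "f (2 *\<^sub>R x) = 2 * f x"
    using assms(1) unfolding sublinear_def by auto
  have tangent: "f x + g \<bullet> (z - x) \<le> f z" for z
    using convex_on_above_linearization[OF convex deriv] .
  show gx: "g \<bullet> x = f x"
    using tangent[of 0] tangent[of "2 *\<^sub>R x"] sublinear_zero[OF assms(1)] double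
    by (simp add: inner_diff_right algebra_simps)
  show "g \<bullet> y \<le> f y"
    using tangent[of y] gx by (simp add: inner_diff_right)
qed

lemma valid_ineq_tight_on_cone_rhs_zero:
  assumes "valid_ineq \<gamma> \<delta> C" and "0 \<in> C" and "z \<in> C" and "2 *\<^sub>R z \<in> C" and "\<gamma> \<bullet> z = \<delta>"
  shows "\<delta> = 0"
proof -
  have "\<gamma> \<bullet> 0 \<le> \<delta>" and "\<gamma> \<bullet> (2 *\<^sub>R z) \<le> \<delta>"
    using assms(1-4) unfolding valid_ineq_def by auto
  then show ?thesis
    using assms(5) by simp
qed

lemma nonpos_on_halfspace_imp_nonpos_multiple:
  fixes u lam :: "'a::real_inner"
  assumes "lam \<noteq> 0" and nonpos: "\<And>w. 0 \<le> lam \<bullet> w \<Longrightarrow> u \<bullet> w \<le> 0"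
  obtains a where "0 \<le> a" and "u = - (a *\<^sub>R lam)"
proof -
  define c where "c = (u \<bullet> lam) / (lam \<bullet> lam)"
  define w where "w = u - c *\<^sub>R lam"
  have "lam \<bullet> w = 0"
    using assms(1) unfolding w_def c_def by (simp add: inner_diff_right inner_commute)
  then have "u \<bullet> w = 0"
    using nonpos[of w] nonpos[of "- w"] by simp
  with \<open>lam \<bullet> w = 0\<close> have "w \<bullet> w = 0"
    unfolding w_def by (simp add: inner_diff_left inner_commute)
  then have "u = c *\<^sub>R lam"
    unfolding w_def by simp
  moreover have "c \<le> 0"
    using nonpos[of lam] unfolding c_def by (simp add: divide_nonpos_nonneg)
  ultimately show thesis
    by (intro that[of "- c"]) auto
qed

lemma has_derivative_inner_max_imp_zero:
  fixes f :: "'a::real_inner \<Rightarrow> real"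
  assumes "(f has_derivative (\<lambda>h. v \<bullet> h)) (at x)" and "\<And>y. f y \<le> f x"
  shows "v = 0"
proof -
  have "(\<lambda>h. v \<bullet> h) = (\<lambda>h. 0)"
    using differential_zero_maxmin[of x UNIV f] assms by blast
  then have "v \<bullet> v = 0"
    by metis
  then show ?thesis by simp
qed

lemma sublinear_cone_valid_gradient_ineq:
  assumes "sublinear \<phi>" and "(\<phi> has_derivative (\<lambda>h. g \<bullet> h)) (at ybar)"
  shows "valid_ineq (- lam, g) 0 {(x, y). \<phi> y \<le> lam \<bullet> x}"
  unfolding valid_ineq_def
  using sublinear_gradient_supports(2)[OF assms] by (auto simp: inner_Pair intro: order_trans)

lemma sublinear_cone_exposes_gradient_ineq:
  fixes \<phi> :: "'b::real_inner \<Rightarrow> real" and lam xbar :: "'a::real_inner"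
  assumes sublinear: "sublinear \<phi>" and "lam \<noteq> 0"
    and deriv: "(\<phi> has_derivative (\<lambda>h. g \<bullet> h)) (at ybar)"
    and boundary: "\<phi> ybar = lam \<bullet> xbar"
  shows "exposes (xbar, ybar) (- lam, g) 0 {(x, y). \<phi> y \<le> lam \<bullet> x}"
    (is "exposes _ _ _ ?C")
  unfolding exposes_def
proof (intro conjI allI impI)
  show "(- lam, g) \<bullet> (xbar, ybar) = 0"
    using sublinear_gradient_supports(1)[OF sublinear deriv] boundary by (simp add: inner_Pair)
next
  fix \<gamma> :: "'a \<times> 'b" and \<delta>
  assume \<gamma>: "\<gamma> \<noteq> 0 \<and> valid_ineq \<gamma> \<delta> ?C \<and> \<gamma> \<bullet> (xbar, ybar) = \<delta>"
  obtain u v where uv: "\<gamma> = (u, v)"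
    by fastforce
  have "\<phi> (2 *\<^sub>R ybar) = 2 * \<phi> ybar"
    using sublinear unfolding sublinear_def by simp
  then have "\<delta> = 0"
    using \<gamma> boundary sublinear_zero[OF sublinear]
    by (intro valid_ineq_tight_on_cone_rhs_zero[of \<gamma> \<delta> ?C "(xbar, ybar)"]) (auto simp: zero_prod_def)
  then have valid: "\<And>x y. \<phi> y \<le> lam \<bullet> x \<Longrightarrow> u \<bullet> x + v \<bullet> y \<le> 0"
    and tight: "u \<bullet> xbar + v \<bullet> ybar = 0"
    using \<gamma> unfolding uv valid_ineq_def by (auto simp: inner_Pair)
  have "u \<bullet> w \<le> 0" if "0 \<le> lam \<bullet> w" for w
    using valid[of ybar "xbar + w"] tight that boundary by (simp add: inner_add_right)
  then obtain a where "0 \<le> a" and u: "u = - (a *\<^sub>R lam)"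
    using nonpos_on_halfspace_imp_nonpos_multiple \<open>lam \<noteq> 0\<close> by blast
  define F where "F y = v \<bullet> y - a * \<phi> y" for y
  have F_max: "F y \<le> F ybar" for y
  proof -
    define s where "s = (\<phi> y - \<phi> ybar) / (lam \<bullet> lam)"
    have "lam \<bullet> (xbar + s *\<^sub>R lam) = \<phi> y"
      using \<open>lam \<noteq> 0\<close> boundary unfolding s_def by (simp add: inner_add_right)
    then have "- a * \<phi> y + v \<bullet> y \<le> 0"
      using valid[of y "xbar + s *\<^sub>R lam"] by (simp add: u)
    moreover have "- a * \<phi> ybar + v \<bullet> ybar = 0"
      using tight boundary by (simp add: u)
    ultimately show ?thesis
      unfolding F_def by simp
  qed
  have "(F has_derivative (\<lambda>h. (v - a *\<^sub>R g) \<bullet> h)) (at ybar)"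
    unfolding F_def using deriv
    by (auto intro!: derivative_eq_intros simp: inner_diff_left)
  then have "v - a *\<^sub>R g = 0"
    using F_max by (rule has_derivative_inner_max_imp_zero)
  then have v: "v = a *\<^sub>R g"
    by simp
  with \<gamma> u uv have "a \<noteq> 0"
    by (auto simp: zero_prod_def)
  then show "\<exists>\<mu>>0. \<gamma> = \<mu> *\<^sub>R (- lam, g) \<and> \<delta> = \<mu> * 0"
    using \<open>0 \<le> a\<close> \<open>\<delta> = 0\<close> uv u v by (intro exI[of _ a]) simp
qed

theorem lemmaA2:
  fixes \<phi> :: "real^'m \<Rightarrow> real" and lam xbar :: "real^'n" and ybar g :: "real^'m"
    and C :: "((real^'n) \<times> (real^'m)) set"
  assumes "sublinear \<phi>"
    and "norm lam = 1"
    and "C = {(x, y). \<phi> y \<le> lam \<bullet> x}"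
    and "(xbar, ybar) \<in> C"
    and "(\<phi> has_derivative (\<lambda>h. g \<bullet> h)) (at ybar)"
    and "\<phi> ybar = lam \<bullet> xbar"
  shows "valid_ineq (- lam, g) 0 C \<and> exposes (xbar, ybar) (- lam, g) 0 C"
proof -
  have "lam \<noteq> 0"
    using assms(2) by auto
  then show ?thesis
    unfolding assms(3)
    using sublinear_cone_valid_gradient_ineq[OF assms(1,5)]
      sublinear_cone_exposes_gradient_ineq[OF assms(1) _ assms(5,6)]
    by blast
qed

end
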